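(* Let $M=\langle n_1,n_2,n_3\rangle$ be a numerical monoid of embedding dimension three with minimal generators $n_1<n_2<n_3$. Then $L(x+n_1)=L(x)+1$ for all $x\in M$, or $\ell(x+n_3)=\ell(x)+1$ for all $x\in M$.
   Context: $\mathbb{N}$ denotes the nonnegative integers. A numerical monoid is a submonoid of $\mathbb{N}$ with finite complement. For $x\in M$, $\mathsf{Z}(x)=\{(a_1,a_2,a_3)\in\mathbb{N}^3\mid a_1n_1+a_2n_2+a_3n_3=x\}$; $L(x)$ and $\ell(x)$ are the maximum and minimum of $a_1+a_2+a_3$ over $(a_1,a_2,a_3)\in\mathsf{Z}(x)$. *)

theory Defs
  imports Main
begin

definition gen_monoid :: "nat \<Rightarrow> nat \<Rightarrow> nat \<Rightarrow> nat set" where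
  "gen_monoid n1 n2 n3 = {x. \<exists>a1 a2 a3. a1 * n1 + a2 * n2 + a3 * n3 = x}"

definition factorizations :: "nat \<Rightarrow> nat \<Rightarrow> nat \<Rightarrow> nat \<Rightarrow> (nat \<times> nat \<times> nat) set" where
  "factorizations n1 n2 n3 x = {(a1, a2, a3). a1 * n1 + a2 * n2 + a3 * n3 = x}"

definition lengths :: "nat \<Rightarrow> nat \<Rightarrow> nat \<Rightarrow> nat \<Rightarrow> nat set" where
  "lengths n1 n2 n3 x = (\<lambda>(a1, a2, a3). a1 + a2 + a3) ` factorizations n1 n2 n3 x"

definition max_len :: "nat \<Rightarrow> nat \<Rightarrow> nat \<Rightarrow> nat \<Rightarrow> nat" where
  "max_len n1 n2 n3 x = Max (lengths n1 n2 n3 x)"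

definition min_len :: "nat \<Rightarrow> nat \<Rightarrow> nat \<Rightarrow> nat \<Rightarrow> nat" where
  "min_len n1 n2 n3 x = Min (lengths n1 n2 n3 x)"

definition emb_dim_three :: "nat \<Rightarrow> nat \<Rightarrow> nat \<Rightarrow> bool" where
  "emb_dim_three n1 n2 n3 \<longleftrightarrow>
     0 < n1 \<and> n1 < n2 \<and> n2 < n3 \<and>
     finite (UNIV - gen_monoid n1 n2 n3) \<and>
     n2 \<notin> gen_monoid n1 0 0 \<and>
     n3 \<notin> gen_monoid n1 n2 0"

end

theory Submission
  imports Defs
begin

(* If L(x + n1) > L(x) + 1, a longest factorization of x + n1 cannot use n1, and comparing it
   with a longest factorization of x extended by n1 produces a length-decreasing relation
   d2 n2 = d1 n1 + d3 n3 with d2 at most the n2-coefficient a2 of that longest factorization.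
   Dually, if l(y + n3) < l(y) + 1, a shortest factorization of y + n3 yields a length-increasing
   relation e2 n2 = e1 n1 + e3 n3 with e2 at most its n2-coefficient b2.  Applying the
   length-increasing relation to the longest factorization and the length-decreasing one to the
   shortest factorization is impossible, so a2 < e2 and b2 < d2, and d2 \<le> a2 < e2 \<le> b2 < d2. *)

lemma finite_lengths:
  assumes "0 < n1" "0 < n2" "0 < n3"
  shows "finite (lengths n1 n2 n3 x)"
proof -
  have "factorizations n1 n2 n3 x \<subseteq> {..x} \<times> {..x} \<times> {..x}"
  proof
    fix p assume "p \<in> factorizations n1 n2 n3 x"
    then obtain a1 a2 a3 where p: "p = (a1, a2, a3)" "a1 * n1 + a2 * n2 + a3 * n3 = x"
      by (auto simp: factorizations_def)
    have "a1 \<le> a1 * n1" "a2 \<le> a2 * n2" "a3 \<le> a3 * n3" using assms by simp_all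
    then have "a1 \<le> x" "a2 \<le> x" "a3 \<le> x" using p(2) by linarith+
    then show "p \<in> {..x} \<times> {..x} \<times> {..x}" by (simp add: p(1))
  qed
  then have "finite (factorizations n1 n2 n3 x)" by (rule finite_subset) simp
  then show ?thesis by (simp add: lengths_def)
qed

lemma length_mem_lengths:
  "a1 * n1 + a2 * n2 + a3 * n3 = x \<Longrightarrow> a1 + a2 + a3 \<in> lengths n1 n2 n3 x"
  unfolding lengths_def factorizations_def by force

lemma length_le_max_len:
  assumes "0 < n1" "0 < n2" "0 < n3" "a1 * n1 + a2 * n2 + a3 * n3 = x"
  shows "a1 + a2 + a3 \<le> max_len n1 n2 n3 x"
  unfolding max_len_def using finite_lengths[OF assms(1-3)] length_mem_lengths[OF assms(4)]
  by simp

lemma min_len_le_length: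
  assumes "0 < n1" "0 < n2" "0 < n3" "a1 * n1 + a2 * n2 + a3 * n3 = x"
  shows "min_len n1 n2 n3 x \<le> a1 + a2 + a3"
  unfolding min_len_def using finite_lengths[OF assms(1-3)] length_mem_lengths[OF assms(4)]
  by simp

lemma lengths_nonempty: "x \<in> gen_monoid n1 n2 n3 \<Longrightarrow> lengths n1 n2 n3 x \<noteq> {}"
  unfolding gen_monoid_def using length_mem_lengths by blast

lemma mem_lengths_obtain_factorization:
  assumes "l \<in> lengths n1 n2 n3 x"
  obtains a1 a2 a3 where "a1 * n1 + a2 * n2 + a3 * n3 = x" "a1 + a2 + a3 = l"
  using assms unfolding lengths_def factorizations_def by auto

lemma max_len_attained:
  assumes "0 < n1" "0 < n2" "0 < n3" "x \<in> gen_monoid n1 n2 n3"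
  obtains a1 a2 a3 where "a1 * n1 + a2 * n2 + a3 * n3 = x" "a1 + a2 + a3 = max_len n1 n2 n3 x"
proof -
  have "max_len n1 n2 n3 x \<in> lengths n1 n2 n3 x"
    unfolding max_len_def
    using finite_lengths[OF assms(1-3)] lengths_nonempty[OF assms(4)] by (rule Max_in)
  then show ?thesis using that by (rule mem_lengths_obtain_factorization)
qed

lemma min_len_attained:
  assumes "0 < n1" "0 < n2" "0 < n3" "x \<in> gen_monoid n1 n2 n3"
  obtains a1 a2 a3 where "a1 * n1 + a2 * n2 + a3 * n3 = x" "a1 + a2 + a3 = min_len n1 n2 n3 x"
proof -
  have "min_len n1 n2 n3 x \<in> lengths n1 n2 n3 x"
    unfolding min_len_def
    using finite_lengths[OF assms(1-3)] lengths_nonempty[OF assms(4)] by (rule Min_in)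
  then show ?thesis using that by (rule mem_lengths_obtain_factorization)
qed

lemma shortening_trade_of_longer_factorization:
  fixes n1 n2 n3 :: nat
  assumes "n1 \<le> n2" "n2 \<le> n3" "0 < n2"
    and eq: "a2 * n2 + a3 * n3 = c1 * n1 + c2 * n2 + c3 * n3"
    and longer: "c1 + c2 + c3 < a2 + a3"
  obtains d1 d2 d3 where "d2 \<le> a2" "d2 * n2 = d1 * n1 + d3 * n3" "d1 + d3 < d2"
proof -
  have "c2 < a2"
  proof (rule ccontr)
    assume "\<not> c2 < a2"
    then obtain k where k: "c2 = a2 + k" using le_Suc_ex by (meson not_less)
    have "a3 * n3 = c1 * n1 + k * n2 + c3 * n3"
      using eq by (simp add: k add_mult_distrib)
    also have "\<dots> \<le> (c1 + k + c3) * n3"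
      using assms(1,2) by (simp add: add_mult_distrib add_mono)
    finally have "a3 \<le> c1 + k + c3" using assms(2,3) by simp
    then show False using longer k by linarith
  qed
  moreover have "a3 < c3"
  proof (rule ccontr)
    assume "\<not> a3 < c3"
    then obtain k where k: "a3 = c3 + k" using le_Suc_ex by (meson not_less)
    have "(a2 + k) * n2 \<le> a2 * n2 + k * n3"
      using assms(2) by (simp add: add_mult_distrib)
    also have "\<dots> = c1 * n1 + c2 * n2"
      using eq by (simp add: k add_mult_distrib)
    also have "\<dots> \<le> (c1 + c2) * n2"
      using assms(1) by (simp add: add_mult_distrib)
    finally have "a2 + k \<le> c1 + c2" using assms(3) by simp
    then show False using longer k by linarith
  qed
  ultimately show ?thesis
    using eq longer by (intro that[of "a2 - c2" c1 "c3 - a3"]) (auto simp: diff_mult_distrib)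
qed

lemma lengthening_trade_of_shorter_factorization:
  fixes n1 n2 n3 :: nat
  assumes "0 < n1" "n1 \<le> n2" "n2 \<le> n3"
    and eq: "b1 * n1 + b2 * n2 = f1 * n1 + f2 * n2 + f3 * n3"
    and shorter: "b1 + b2 < f1 + f2 + f3"
  obtains e1 e2 e3 where "e2 \<le> b2" "e2 * n2 = e1 * n1 + e3 * n3" "e2 < e1 + e3"
proof -
  have "f2 < b2"
  proof (rule ccontr)
    assume "\<not> f2 < b2"
    then obtain k where k: "f2 = b2 + k" using le_Suc_ex by (meson not_less)
    have "(f1 + k + f3) * n1 \<le> f1 * n1 + k * n2 + f3 * n3"
      using assms(2,3) by (simp add: add_mult_distrib add_mono)
    also have "\<dots> = b1 * n1"
      using eq by (simp add: k add_mult_distrib)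
    finally have "f1 + k + f3 \<le> b1" using assms(1) by simp
    then show False using shorter k by linarith
  qed
  moreover have "b1 < f1"
  proof (rule ccontr)
    assume "\<not> b1 < f1"
    then obtain k where k: "b1 = f1 + k" using le_Suc_ex by (meson not_less)
    have "(f2 + f3) * n2 \<le> f2 * n2 + f3 * n3"
      using assms(3) by (simp add: add_mult_distrib)
    also have "\<dots> = k * n1 + b2 * n2"
      using eq by (simp add: k add_mult_distrib)
    also have "\<dots> \<le> (k + b2) * n2"
      using assms(2) by (simp add: add_mult_distrib)
    finally have "f2 + f3 \<le> k + b2" using assms(1,2) by simp
    then show False using shorter k by linarith
  qed
  ultimately show ?thesis
    using eq shorter by (intro that[of "b2 - f2" "f1 - b1" f3]) (auto simp: diff_mult_distrib)
qed

lemma max_len_factorization_resists_lengthening_trade: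
  assumes "0 < n1" "0 < n2" "0 < n3"
    and a: "a1 * n1 + a2 * n2 + a3 * n3 = z" "a1 + a2 + a3 = max_len n1 n2 n3 z"
    and e: "e2 * n2 = e1 * n1 + e3 * n3" "e2 < e1 + e3"
  shows "a2 < e2"
proof (rule ccontr)
  assume "\<not> a2 < e2"
  then obtain k where k: "a2 = e2 + k" using le_Suc_ex by (meson not_less)
  have "(a1 + e1) * n1 + k * n2 + (a3 + e3) * n3 = z"
    using a(1) e(1) by (simp add: k add_mult_distrib)
  from length_le_max_len[OF assms(1-3) this] show False using a(2) e(2) k by linarith
qed

lemma min_len_factorization_resists_shortening_trade:
  assumes "0 < n1" "0 < n2" "0 < n3"
    and b: "b1 * n1 + b2 * n2 + b3 * n3 = w" "b1 + b2 + b3 = min_len n1 n2 n3 w"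
    and d: "d2 * n2 = d1 * n1 + d3 * n3" "d1 + d3 < d2"
  shows "b2 < d2"
proof (rule ccontr)
  assume "\<not> b2 < d2"
  then obtain k where k: "b2 = d2 + k" using le_Suc_ex by (meson not_less)
  have "(b1 + d1) * n1 + k * n2 + (b3 + d3) * n3 = w"
    using b(1) d(1) by (simp add: k add_mult_distrib)
  from min_len_le_length[OF assms(1-3) this] show False using b(2) d(2) k by linarith
qed

lemma shortening_trade_if_max_len_jumps:
  fixes n1 n2 n3 :: nat
  assumes "0 < n1" "n1 \<le> n2" "n2 \<le> n3" "x \<in> gen_monoid n1 n2 n3"
    and jump: "max_len n1 n2 n3 (x + n1) \<noteq> max_len n1 n2 n3 x + 1"
  obtains a1 a2 a3 d1 d2 d3 where
    "a1 * n1 + a2 * n2 + a3 * n3 = x + n1" "a1 + a2 + a3 = max_len n1 n2 n3 (x + n1)"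
    "d2 \<le> a2" "d2 * n2 = d1 * n1 + d3 * n3" "d1 + d3 < d2"
proof -
  have pos: "0 < n1" "0 < n2" "0 < n3" using assms(1-3) by simp_all
  obtain c1 c2 c3 where c: "c1 * n1 + c2 * n2 + c3 * n3 = x" "c1 + c2 + c3 = max_len n1 n2 n3 x"
    using max_len_attained[OF pos assms(4)] .
  have c': "(c1 + 1) * n1 + c2 * n2 + c3 * n3 = x + n1" using c(1) by simp
  then have "x + n1 \<in> gen_monoid n1 n2 n3" unfolding gen_monoid_def by blast
  then obtain a1 a2 a3 where
    a: "a1 * n1 + a2 * n2 + a3 * n3 = x + n1" "a1 + a2 + a3 = max_len n1 n2 n3 (x + n1)"
    using max_len_attained[OF pos] by blast
  have "max_len n1 n2 n3 x + 1 < max_len n1 n2 n3 (x + n1)"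
    using length_le_max_len[OF pos c'] c(2) jump by simp
  have "a1 = 0"
  proof (rule ccontr)
    assume "a1 \<noteq> 0"
    then have "(a1 - 1) * n1 + a2 * n2 + a3 * n3 = x"
      using a(1) by (cases a1) simp_all
    from length_le_max_len[OF pos this] show False
      using \<open>a1 \<noteq> 0\<close> a(2) \<open>max_len n1 n2 n3 x + 1 < _\<close> by linarith
  qed
  have "a2 * n2 + a3 * n3 = (c1 + 1) * n1 + c2 * n2 + c3 * n3"
    using a(1) c' \<open>a1 = 0\<close> by simp
  moreover have "(c1 + 1) + c2 + c3 < a2 + a3"
    using a(2) c(2) \<open>a1 = 0\<close> \<open>max_len n1 n2 n3 x + 1 < _\<close> by simp
  ultimately obtain d1 d2 d3 where "d2 \<le> a2" "d2 * n2 = d1 * n1 + d3 * n3" "d1 + d3 < d2"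
    using shortening_trade_of_longer_factorization assms(2,3) pos(2) by blast
  then show ?thesis using a that by blast
qed

lemma lengthening_trade_if_min_len_drops:
  fixes n1 n2 n3 :: nat
  assumes "0 < n1" "n1 \<le> n2" "n2 \<le> n3" "y \<in> gen_monoid n1 n2 n3"
    and drop: "min_len n1 n2 n3 (y + n3) \<noteq> min_len n1 n2 n3 y + 1"
  obtains b1 b2 b3 e1 e2 e3 where
    "b1 * n1 + b2 * n2 + b3 * n3 = y + n3" "b1 + b2 + b3 = min_len n1 n2 n3 (y + n3)"
    "e2 \<le> b2" "e2 * n2 = e1 * n1 + e3 * n3" "e2 < e1 + e3"
proof -
  have pos: "0 < n1" "0 < n2" "0 < n3" using assms(1-3) by simp_all
  obtain f1 f2 f3 where f: "f1 * n1 + f2 * n2 + f3 * n3 = y" "f1 + f2 + f3 = min_len n1 n2 n3 y"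
    using min_len_attained[OF pos assms(4)] .
  have f': "f1 * n1 + f2 * n2 + (f3 + 1) * n3 = y + n3" using f(1) by simp
  then have "y + n3 \<in> gen_monoid n1 n2 n3" unfolding gen_monoid_def by blast
  then obtain b1 b2 b3 where
    b: "b1 * n1 + b2 * n2 + b3 * n3 = y + n3" "b1 + b2 + b3 = min_len n1 n2 n3 (y + n3)"
    using min_len_attained[OF pos] by blast
  have "min_len n1 n2 n3 (y + n3) < min_len n1 n2 n3 y + 1"
    using min_len_le_length[OF pos f'] f(2) drop by simp
  have "b3 = 0"
  proof (rule ccontr)
    assume "b3 \<noteq> 0"
    then have "b1 * n1 + b2 * n2 + (b3 - 1) * n3 = y"
      using b(1) by (cases b3) simp_all
    from min_len_le_length[OF pos this] show False
      using \<open>b3 \<noteq> 0\<close> b(2) \<open>min_len n1 n2 n3 (y + n3) < _\<close> by linarith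
  qed
  have "b1 * n1 + b2 * n2 = f1 * n1 + f2 * n2 + (f3 + 1) * n3"
    using b(1) f' \<open>b3 = 0\<close> by simp
  moreover have "b1 + b2 < f1 + f2 + (f3 + 1)"
    using b(2) f(2) \<open>b3 = 0\<close> \<open>min_len n1 n2 n3 (y + n3) < _\<close> by simp
  ultimately obtain e1 e2 e3 where "e2 \<le> b2" "e2 * n2 = e1 * n1 + e3 * n3" "e2 < e1 + e3"
    using lengthening_trade_of_shorter_factorization assms(1-3) by blast
  then show ?thesis using b that by blast
qed

theorem mainTheorem9:
  fixes n1 n2 n3 :: nat
  assumes "emb_dim_three n1 n2 n3"
  shows "(\<forall>x \<in> gen_monoid n1 n2 n3. max_len n1 n2 n3 (x + n1) = max_len n1 n2 n3 x + 1)
       \<or> (\<forall>x \<in> gen_monoid n1 n2 n3. min_len n1 n2 n3 (x + n3) = min_len n1 n2 n3 x + 1)"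
proof (rule ccontr)
  assume "\<not> ?thesis"
  then obtain x y where
    x: "x \<in> gen_monoid n1 n2 n3" "max_len n1 n2 n3 (x + n1) \<noteq> max_len n1 n2 n3 x + 1" and
    y: "y \<in> gen_monoid n1 n2 n3" "min_len n1 n2 n3 (y + n3) \<noteq> min_len n1 n2 n3 y + 1"
    by blast
  have order: "0 < n1" "n1 \<le> n2" "n2 \<le> n3" using assms by (simp_all add: emb_dim_three_def)
  then have pos: "0 < n1" "0 < n2" "0 < n3" by simp_all
  obtain a1 a2 a3 d1 d2 d3 where
    a: "a1 * n1 + a2 * n2 + a3 * n3 = x + n1" "a1 + a2 + a3 = max_len n1 n2 n3 (x + n1)" and
    d: "d2 \<le> a2" "d2 * n2 = d1 * n1 + d3 * n3" "d1 + d3 < d2"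
    using shortening_trade_if_max_len_jumps[OF order x] .
  obtain b1 b2 b3 e1 e2 e3 where
    b: "b1 * n1 + b2 * n2 + b3 * n3 = y + n3" "b1 + b2 + b3 = min_len n1 n2 n3 (y + n3)" and
    e: "e2 \<le> b2" "e2 * n2 = e1 * n1 + e3 * n3" "e2 < e1 + e3"
    using lengthening_trade_if_min_len_drops[OF order y] .
  have "a2 < e2" using max_len_factorization_resists_lengthening_trade[OF pos a e(2,3)] .
  moreover have "b2 < d2" using min_len_factorization_resists_shortening_trade[OF pos b d(2,3)] .
  ultimately show False using d(1) e(1) by linarith
qed

end
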